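(* Consider binary floating-point arithmetic with precision $p \ge 2$ and unit round-off $u = 2^{-p}$, where every operation (including square root) is correctly rounded to nearest, $\mathrm{RN}$. Let $x,y$ be floating-point numbers and consider the algorithm $s_x \gets \mathrm{RN}(x^2)$, $s_y \gets \mathrm{RN}(y^2)$, $\sigma \gets \mathrm{RN}(s_x+s_y)$, $\rho \gets \mathrm{RN}(\sqrt{\sigma})$. Barring underflow and overflow, for $u \le 1/4$ the relative error $R = \rho/\sqrt{x^2+y^2} - 1$ satisfies \[ |R| \le \frac{1+3u-\sqrt{1+2u}}{1+u} = 2u + \kappa u^2, \quad\text{with } \kappa < -\tfrac54. \]
   Context: A radix-2 floating-point number of precision $p$ has the form $M\cdot 2^{e-p+1}$ with integers $|M|\le 2^p-1$ and $e_{\min}\le e\le e_{\max}$. $\mathrm{RN}$ denotes rounding to nearest (ties-to-even) into this set. "Barring underflow and overflow" means all intermediate results lie in the normal range $2^{e_{\min}}\le |t|\le (2^p-1)2^{e_{\max}-p+1}$ (or are zero). The unit round-off is $u=2^{-p}$. *)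

theory Defs
  imports Complex_Main
begin

definition fp_set :: "nat \<Rightarrow> int \<Rightarrow> int \<Rightarrow> real set" where
  "fp_set p emin emax =
     {of_int M * 2 powr (of_int (e - int p + 1)) | M e.
        \<bar>M\<bar> \<le> 2 ^ p - 1 \<and> emin \<le> e \<and> e \<le> emax}"

definition fp_even :: "nat \<Rightarrow> int \<Rightarrow> int \<Rightarrow> real \<Rightarrow> bool" where
  "fp_even p emin emax r \<longleftrightarrow>
     (\<exists>M e. \<bar>M\<bar> \<le> 2 ^ p - 1 \<and> emin \<le> e \<and> e \<le> emax \<and> even M \<and>
            r = of_int M * 2 powr (of_int (e - int p + 1)))"

definition is_RN :: "nat \<Rightarrow> int \<Rightarrow> int \<Rightarrow> real \<Rightarrow> real \<Rightarrow> bool" where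
  "is_RN p emin emax t r \<longleftrightarrow>
     r \<in> fp_set p emin emax \<and>
     (\<forall>f \<in> fp_set p emin emax. \<bar>t - r\<bar> \<le> \<bar>t - f\<bar>) \<and>
     (\<forall>f \<in> fp_set p emin emax. \<bar>t - f\<bar> = \<bar>t - r\<bar> \<and> f \<noteq> r \<longrightarrow> fp_even p emin emax r)"

definition in_normal_range :: "nat \<Rightarrow> int \<Rightarrow> int \<Rightarrow> real \<Rightarrow> bool" where
  "in_normal_range p emin emax t \<longleftrightarrow>
     t = 0 \<or> (2 powr of_int emin \<le> \<bar>t\<bar> \<and> \<bar>t\<bar> \<le> (2 ^ p - 1) * 2 powr of_int (emax - int p + 1))"

end

theory Submission
  imports Defs
begin

text \<open>
  In the normal range a real t with 2^e \<le> t < 2^(e+1) lies within half an ulp, u 2^e, of a float,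
  and within t - 2^e of the float 2^e; together these give the relative error bound u/(1+u) for
  every correctly rounded operation. Propagated through the squares and their sum, this confines
  \<sigma> to [(1 - v)^2, (1 + v)^2] (x^2 + y^2) with v = u/(1+u).

  For the square root the generic bound is sharpened to \<rho> (1 + 3u) \<le> (1 + 4u) sqrt \<sigma>, because
  \<sigma> is itself a float. If \<rho> \<ge> 2^e (1 + 4u), half an ulp is at most u \<rho> / (1 + 4u). Otherwise
  \<rho> = 2^e (1 + 2u) > sqrt \<sigma>, so sqrt \<sigma> \<ge> 2^e (1 + u); this pushes \<sigma> beyond the float
  2^(2e) (1 + 2u), hence up to 2^(2e) (1 + 4u), and ((1 + 2u)(1 + 3u))^2 \<le> (1 + 4u)^3 concludes.
\<close>

section \<open>The floating-point grid\<close>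

lemma fp_set_nonempty_imp_exponent_range:
  "f \<in> fp_set p emin emax \<Longrightarrow> emin \<le> emax"
  unfolding fp_set_def by auto

lemma fp_set_zero:
  assumes "emin \<le> emax"
  shows "0 \<in> fp_set p emin emax"
  unfolding fp_set_def using assms
  by (intro CollectI exI [of _ 0] exI [of _ emin]) simp

lemma pow2_eq_times_ulp:
  assumes "p \<ge> 1"
  shows "(2::real) powr of_int e = 2 ^ (p - 1) * 2 powr of_int (e - int p + 1)"
proof -
  have "(2::real) powr of_int e = 2 powr real (p - 1) * 2 powr of_int (e - int p + 1)"
    using assms by (simp add: powr_add [symmetric] of_nat_diff)
  then show ?thesis
    by (simp add: powr_realpow)
qed

lemma pow2_succ_eq_times_ulp:
  "(2::real) powr of_int (e + 1) = 2 ^ p * 2 powr of_int (e - int p + 1)"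
proof -
  have "(2::real) powr of_int (e + 1) = 2 powr real p * 2 powr of_int (e - int p + 1)"
    unfolding powr_add [symmetric] by (intro arg_cong [where f = "(powr) 2"]) simp
  then show ?thesis
    by (simp add: powr_realpow)
qed

lemma pow2_ulp_eq:
  "(2::real) powr of_int (e - int p + 1) = 2 * 2 powr - real p * 2 powr of_int e"
proof -
  have "(2::real) powr of_int (e - int p + 1) = 2 powr 1 * 2 powr - real p * 2 powr of_int e"
    unfolding powr_add [symmetric] by (intro arg_cong [where f = "(powr) 2"]) simp
  then show ?thesis
    by simp
qed

lemma fp_set_pow2:
  assumes "p \<ge> 1" "emin \<le> e" "e \<le> emax"
  shows "(2::real) powr of_int e \<in> fp_set p emin emax"
proof -
  have "(2::int) ^ p = 2 * 2 ^ (p - 1)"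
    using assms(1) by (cases p) simp_all
  then have "\<bar>(2::int) ^ (p - 1)\<bar> \<le> 2 ^ p - 1"
    by simp
  then show ?thesis
    unfolding fp_set_def pow2_eq_times_ulp [OF assms(1), of e] using assms(2,3)
    by (intro CollectI exI [of _ "2 ^ (p - 1)"] exI [of _ e]) simp
qed

lemma scaled_significand_less_pow2:
  assumes "\<bar>M\<bar> \<le> 2 ^ p - 1"
  shows "\<bar>of_int M * 2 powr of_int (k - int p + 1)\<bar> < (2::real) powr of_int (k + 1)"
proof -
  have "real_of_int \<bar>M\<bar> \<le> real_of_int (2 ^ p - 1)"
    using assms by (simp only: of_int_le_iff)
  then have "\<bar>real_of_int M\<bar> \<le> 2 ^ p - 1"
    by simp
  then have "\<bar>of_int M * 2 powr of_int (k - int p + 1)\<bar> \<le> (2 ^ p - 1) * (2::real) powr of_int (k - int p + 1)"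
    by (simp add: abs_mult mult_right_mono)
  also have "\<dots> < 2 ^ p * 2 powr of_int (k - int p + 1)"
    by simp
  also have "\<dots> = 2 powr of_int (k + 1)"
    by (rule pow2_succ_eq_times_ulp [symmetric])
  finally show ?thesis .
qed

lemma fp_set_on_grid:
  assumes "f \<in> fp_set p emin emax" "(2::real) powr of_int e \<le> \<bar>f\<bar>"
  shows "\<exists>k::int. f = of_int k * 2 powr of_int (e - int p + 1)"
proof -
  obtain M k where M: "\<bar>M\<bar> \<le> 2 ^ p - 1" and f: "f = of_int M * 2 powr of_int (k - int p + 1)"
    using assms(1) unfolding fp_set_def by blast
  have "(2::real) powr of_int e < 2 powr of_int (k + 1)"
    using assms(2) scaled_significand_less_pow2 [OF M, of k] f by linarith
  then have "e \<le> k"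
    by simp
  then have "real_of_int (k - int p + 1) = real (nat (k - e)) + of_int (e - int p + 1)"
    by simp
  then have "(2::real) powr of_int (k - int p + 1) = 2 ^ nat (k - e) * 2 powr of_int (e - int p + 1)"
    by (simp only: powr_add powr_realpow [of "2::real", simplified])
  then have "f = of_int (M * 2 ^ nat (k - e)) * 2 powr of_int (e - int p + 1)"
    using f by simp
  then show ?thesis ..
qed

lemma fp_set_gap_above_pow2:
  fixes j :: nat
  assumes f: "f \<in> fp_set p emin emax" and p: "p \<ge> 1"
    and less: "2 powr of_int e * (1 + 2 * of_nat j * 2 powr - real p) < f"
  shows "2 powr of_int e * (1 + 2 * of_nat (j + 1) * 2 powr - real p) \<le> f"
proof -
  define U where "U = (2::real) powr of_int (e - int p + 1)"
  have U: "U > 0"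
    unfolding U_def by simp
  have E: "2 powr of_int e = 2 ^ (p - 1) * U"
    unfolding U_def by (rule pow2_eq_times_ulp [OF p])
  have ulp: "2 powr of_int e * (2 * 2 powr - real p) = U"
    unfolding U_def pow2_ulp_eq by simp
  have scaled: "2 powr of_int e * (1 + 2 * of_nat i * 2 powr - real p) = (2 ^ (p - 1) + of_nat i) * U"
    for i :: nat
  proof -
    have "2 powr of_int e * (1 + 2 * of_nat i * 2 powr - real p)
        = 2 powr of_int e + of_nat i * (2 powr of_int e * (2 * 2 powr - real p))"
      by (simp add: algebra_simps)
    then show ?thesis
      unfolding ulp using E by (simp add: algebra_simps)
  qed
  have "0 \<le> of_nat j * U"
    using U by simp
  then have "(2::real) powr of_int e \<le> \<bar>f\<bar>"
    using less [unfolded scaled] unfolding E distrib_right by linarith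
  then obtain k where k: "f = of_int k * U"
    using fp_set_on_grid [OF f] unfolding U_def by blast
  have "real_of_int (2 ^ (p - 1) + int j) < of_int k"
    using less U unfolding scaled k by simp
  then have "2 ^ (p - 1) + int j + 1 \<le> k"
    unfolding of_int_less_iff by linarith
  then have "real_of_int (2 ^ (p - 1) + int j + 1) \<le> of_int k"
    by (simp only: of_int_le_iff)
  then show ?thesis
    using U unfolding scaled k by (simp add: mult_right_mono)
qed

lemma fp_set_square_gap:
  assumes \<sigma>: "\<sigma> \<in> fp_set p emin emax" "0 \<le> \<sigma>" and p: "p \<ge> 1"
    and above: "2 powr of_int e * (1 + 2 powr - real p) \<le> sqrt \<sigma>"
  shows "(2 powr of_int e)\<^sup>2 * (1 + 4 * 2 powr - real p) \<le> \<sigma>"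
proof -
  define u where "u = (2::real) powr - real p"
  define E where "E = (2::real) powr of_int e"
  have "0 < u" "0 < E"
    unfolding u_def E_def by simp_all
  have "E\<^sup>2 * (1 + u)\<^sup>2 \<le> (sqrt \<sigma>)\<^sup>2"
    using above \<open>0 < u\<close> \<open>0 < E\<close> unfolding power_mult_distrib [symmetric] E_def u_def
    by (intro power_mono) auto
  moreover have "E\<^sup>2 * (1 + 2 * u) < E\<^sup>2 * (1 + u)\<^sup>2"
    using \<open>0 < u\<close> \<open>0 < E\<close> by (intro mult_strict_left_mono) (simp_all add: power2_eq_square algebra_simps)
  ultimately have "E\<^sup>2 * (1 + 2 * u) < \<sigma>"
    using \<sigma>(2) by simp
  moreover have E2: "E\<^sup>2 = 2 powr of_int (2 * e)"
    unfolding E_def by (simp add: power2_eq_square powr_add [symmetric])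
  ultimately have "2 powr of_int (2 * e) * (1 + 2 * of_nat 1 * 2 powr - real p) < \<sigma>"
    unfolding u_def by simp
  from fp_set_gap_above_pow2 [OF \<sigma>(1) p this]
  show ?thesis
    unfolding E_def [symmetric] E2 by simp
qed

lemma exponent_le_emax_of_le_max_float:
  assumes "(2::real) powr of_int e \<le> t" "t \<le> (2 ^ p - 1) * 2 powr of_int (emax - int p + 1)"
  shows "e \<le> emax"
proof -
  have "\<bar>2 ^ p - 1\<bar> \<le> (2::int) ^ p - 1"
    by simp
  from scaled_significand_less_pow2 [OF this, of emax]
  have "(2 ^ p - 1) * 2 powr of_int (emax - int p + 1) < (2::real) powr of_int (emax + 1)"
    by simp
  then have "(2::real) powr of_int e < 2 powr of_int (emax + 1)"
    using assms by linarith
  then show ?thesis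
    by simp
qed

lemma fp_set_ulp_multiple:
  assumes p: "p \<ge> 1" and e: "emin \<le> e" "e \<le> emax" and M: "0 \<le> M" "M \<le> 2 ^ p"
    and top: "e = emax \<Longrightarrow> M \<le> 2 ^ p - 1"
  shows "of_int M * 2 powr of_int (e - int p + 1) \<in> fp_set p emin emax"
proof (cases "M \<le> 2 ^ p - 1")
  case True
  then show ?thesis
    unfolding fp_set_def using M(1) e by (intro CollectI exI [of _ M] exI [of _ e]) simp
next
  case False
  then have "M = 2 ^ p" "e + 1 \<le> emax"
    using M(2) top e(2) by force+
  then show ?thesis
    using fp_set_pow2 [OF p, of emin "e + 1" emax] e(1) unfolding pow2_succ_eq_times_ulp [of e p] by simp
qed

lemma round_multiple_error:
  fixes t U :: real
  assumes "0 < U"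
  shows "\<bar>t - of_int (round (t / U)) * U\<bar> \<le> U / 2"
proof -
  have "t - of_int (round (t / U)) * U = (t / U - of_int (round (t / U))) * U"
    using assms by (simp add: field_simps)
  then have "\<bar>t - of_int (round (t / U)) * U\<bar> = \<bar>of_int (round (t / U)) - t / U\<bar> * U"
    using assms by (simp add: abs_mult abs_minus_commute)
  also have "\<dots> \<le> 1 / 2 * U"
    using assms by (intro mult_right_mono of_int_round_abs_le) simp
  finally show ?thesis
    by simp
qed

lemma fp_set_approx_in_binade:
  assumes p: "p \<ge> 1" and emin: "emin \<le> e"
    and lo: "2 powr of_int e \<le> t" and hi: "t < 2 powr of_int (e + 1)"
    and max: "t \<le> (2 ^ p - 1) * 2 powr of_int (emax - int p + 1)"
  shows "\<exists>f \<in> fp_set p emin emax. \<bar>t - f\<bar> \<le> 2 powr - real p * 2 powr of_int e"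
proof -
  define U where "U = (2::real) powr of_int (e - int p + 1)"
  define M where "M = round (t / U)"
  have U: "U > 0"
    unfolding U_def by simp
  have emax: "e \<le> emax"
    using exponent_le_emax_of_le_max_float lo max by blast
  have "2 ^ (p - 1) \<le> t / U" "t / U < 2 ^ p"
    using lo hi U pow2_eq_times_ulp [OF p, of e] pow2_succ_eq_times_ulp [of e p]
    unfolding U_def by (simp_all add: le_divide_eq divide_less_eq)
  moreover have "(1::real) \<le> 2 ^ (p - 1)"
    by simp
  ultimately have "real_of_int 0 < of_int M" "real_of_int M < of_int (2 ^ p + 1)"
    using of_int_round_ge [of "t / U"] of_int_round_le [of "t / U"] unfolding M_def
    by (linarith, simp)
  then have "0 \<le> M" "M \<le> 2 ^ p"
    unfolding of_int_less_iff by simp_all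
  moreover have "M \<le> 2 ^ p - 1" if "e = emax"
  proof -
    have "t / U \<le> 2 ^ p - 1"
      using max U that unfolding U_def by (simp add: divide_le_eq)
    then have "real_of_int M < 2 ^ p"
      using of_int_round_le [of "t / U"] unfolding M_def by linarith
    then show ?thesis
      by simp
  qed
  ultimately have "of_int M * U \<in> fp_set p emin emax"
    unfolding U_def using emin emax by (intro fp_set_ulp_multiple [OF p]) auto
  moreover have "\<bar>t - of_int M * U\<bar> \<le> 2 powr - real p * 2 powr of_int e"
    using round_multiple_error [OF U, of t] unfolding M_def U_def pow2_ulp_eq by simp
  ultimately show ?thesis ..
qed

section \<open>Rounding to nearest\<close>

lemma is_RN_in_fp_set:
  "is_RN p emin emax t r \<Longrightarrow> r \<in> fp_set p emin emax"
  unfolding is_RN_def by blast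

lemma is_RN_closest:
  "is_RN p emin emax t r \<Longrightarrow> f \<in> fp_set p emin emax \<Longrightarrow> \<bar>r - t\<bar> \<le> \<bar>f - t\<bar>"
  unfolding is_RN_def by (auto simp: abs_minus_commute)

lemma is_RN_error_in_binade:
  assumes p: "p \<ge> 1" and t: "t > 0" "in_normal_range p emin emax t"
    and rn: "is_RN p emin emax t r"
  obtains e :: int where "2 powr of_int e \<le> t"
    and "\<bar>r - t\<bar> \<le> 2 powr - real p * 2 powr of_int e"
    and "\<bar>r - t\<bar> \<le> t - 2 powr of_int e"
proof -
  define e where "e = \<lfloor>log 2 t\<rfloor>"
  have binade: "2 powr of_int e \<le> t" "t < 2 powr of_int (e + 1)"
    using floor_log_eq_powr_iff [OF t(1), of 2 e] unfolding e_def by simp_all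
  have range: "2 powr of_int emin \<le> t" "t \<le> (2 ^ p - 1) * 2 powr of_int (emax - int p + 1)"
    using t unfolding in_normal_range_def by auto
  have "(2::real) powr of_int emin < 2 powr of_int (e + 1)"
    using binade(2) range(1) by linarith
  then have "emin \<le> e"
    by simp
  from fp_set_approx_in_binade [OF p this binade range(2)]
  obtain f where "f \<in> fp_set p emin emax" "\<bar>t - f\<bar> \<le> 2 powr - real p * 2 powr of_int e" ..
  then have "\<bar>r - t\<bar> \<le> 2 powr - real p * 2 powr of_int e"
    using is_RN_closest [OF rn] by (force simp: abs_minus_commute)
  moreover have "\<bar>r - t\<bar> \<le> t - 2 powr of_int e"
    using is_RN_closest [OF rn fp_set_pow2 [OF p \<open>emin \<le> e\<close> exponent_le_emax_of_le_max_float [OF binade(1) range(2)]]]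
      binade(1) by simp
  ultimately show ?thesis
    using that binade(1) by blast
qed

lemma is_RN_relative_error:
  assumes p: "p \<ge> 1" and t: "t \<ge> 0" "in_normal_range p emin emax t"
    and rn: "is_RN p emin emax t r"
  shows "\<bar>r - t\<bar> \<le> 2 powr - real p / (1 + 2 powr - real p) * t"
proof (cases "t = 0")
  case True
  have "0 \<in> fp_set p emin emax"
    using is_RN_in_fp_set [OF rn] by (intro fp_set_zero fp_set_nonempty_imp_exponent_range)
  then show ?thesis
    using is_RN_closest [OF rn] True by force
next
  case False
  define u where "u = (2::real) powr - real p"
  have "u > 0"
    unfolding u_def by simp
  from False t obtain e where "\<bar>r - t\<bar> \<le> u * 2 powr of_int e" "\<bar>r - t\<bar> \<le> t - 2 powr of_int e"
    using is_RN_error_in_binade [OF p _ t(2) rn] unfolding u_def by force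
  then have "\<bar>r - t\<bar> * (1 + u) \<le> u * t"
    using \<open>u > 0\<close> mult_left_mono [of "\<bar>r - t\<bar>" "t - 2 powr of_int e" u] by (simp add: algebra_simps)
  then show ?thesis
    using \<open>u > 0\<close> unfolding u_def [symmetric] by (simp add: le_divide_eq mult.commute)
qed

lemma unit_roundoff_le_quarter:
  assumes "p \<ge> 2"
  shows "(2::real) powr - real p \<le> 1 / 4"
proof -
  have "(2::real) powr - real p \<le> 2 powr - 2"
    using assms by (intro powr_mono) auto
  then show ?thesis
    by (simp add: powr_minus)
qed

lemma prod_sq_le_cube_of_le_quarter:
  fixes u :: real
  assumes "0 \<le> u" "u \<le> 1 / 4"
  shows "((1 + 2 * u) * (1 + 3 * u))\<^sup>2 \<le> (1 + 4 * u) ^ 3"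
proof -
  have "36 * u ^ 3 \<le> 9 * u\<^sup>2"
    using assms mult_left_mono [of u "1 / 4" "36 * u\<^sup>2"] by (simp add: power2_eq_square power3_eq_cube)
  moreover have "u\<^sup>2 \<le> u / 4"
    using assms mult_left_mono [of u "1 / 4" u] by (simp add: power2_eq_square)
  ultimately have "0 \<le> 2 + 11 * u + 4 * u\<^sup>2 - 36 * u ^ 3"
    using assms by linarith
  then have "0 \<le> u * (2 + 11 * u + 4 * u\<^sup>2 - 36 * u ^ 3)"
    using assms by simp
  also have "\<dots> = (1 + 4 * u) ^ 3 - ((1 + 2 * u) * (1 + 3 * u))\<^sup>2"
    by (simp add: algebra_simps power2_eq_square power3_eq_cube)
  finally show ?thesis
    by simp
qed

lemma prod_le_sqrt_of_le_quarter:
  fixes u E \<sigma> :: real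
  assumes u: "0 \<le> u" "u \<le> 1 / 4" and \<sigma>: "E\<^sup>2 * (1 + 4 * u) \<le> \<sigma>"
  shows "E * (1 + 2 * u) * (1 + 3 * u) \<le> (1 + 4 * u) * sqrt \<sigma>"
proof -
  have "0 \<le> E\<^sup>2 * (1 + 4 * u)"
    using u(1) by simp
  then have "0 \<le> \<sigma>"
    using \<sigma> by linarith
  have "(E * (1 + 2 * u) * (1 + 3 * u))\<^sup>2 = E\<^sup>2 * ((1 + 2 * u) * (1 + 3 * u))\<^sup>2"
    by (simp add: power_mult_distrib)
  also have "\<dots> \<le> E\<^sup>2 * (1 + 4 * u) ^ 3"
    using prod_sq_le_cube_of_le_quarter u by (intro mult_left_mono) auto
  also have "\<dots> = (1 + 4 * u)\<^sup>2 * (E\<^sup>2 * (1 + 4 * u))"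
    by (simp add: power2_eq_square power3_eq_cube)
  also have "\<dots> \<le> (1 + 4 * u)\<^sup>2 * \<sigma>"
    using \<sigma> by (intro mult_left_mono) auto
  also have "\<dots> = ((1 + 4 * u) * sqrt \<sigma>)\<^sup>2"
    using \<open>0 \<le> \<sigma>\<close> by (simp add: power_mult_distrib)
  finally have "(E * (1 + 2 * u) * (1 + 3 * u))\<^sup>2 \<le> ((1 + 4 * u) * sqrt \<sigma>)\<^sup>2" .
  moreover have "0 \<le> (1 + 4 * u) * sqrt \<sigma>"
    using u(1) \<open>0 \<le> \<sigma>\<close> by simp
  ultimately show ?thesis
    by (rule power2_le_imp_le)
qed

lemma is_RN_sqrt_of_float_upper:
  assumes p: "p \<ge> 2" and \<sigma>: "\<sigma> \<in> fp_set p emin emax" "\<sigma> > 0"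
    and normal: "in_normal_range p emin emax (sqrt \<sigma>)" and rn: "is_RN p emin emax (sqrt \<sigma>) \<rho>"
  shows "\<rho> * (1 + 3 * 2 powr - real p) \<le> (1 + 4 * 2 powr - real p) * sqrt \<sigma>"
proof -
  define u where "u = (2::real) powr - real p"
  define S where "S = sqrt \<sigma>"
  have p1: "p \<ge> 1"
    using p by simp
  have u: "0 < u" "u \<le> 1 / 4"
    unfolding u_def using unit_roundoff_le_quarter [OF p] by simp_all
  have S: "S > 0"
    unfolding S_def using \<sigma>(2) by simp
  obtain e where "2 powr of_int e \<le> S" "\<bar>\<rho> - S\<bar> \<le> u * 2 powr of_int e"
    using is_RN_error_in_binade [OF p1 S normal [folded S_def] rn [folded S_def]] unfolding u_def by blast
  moreover define E where "E = (2::real) powr of_int e"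
  ultimately have E: "0 < E" "E \<le> S" and err: "\<bar>\<rho> - S\<bar> \<le> u * E"
    by simp_all
  note \<rho> = is_RN_in_fp_set [OF rn]
  show ?thesis
  proof (cases "\<rho> \<le> S")
    case True
    have "\<rho> * (1 + 3 * u) \<le> S * (1 + 3 * u)"
      using True u(1) by (intro mult_right_mono) auto
    also have "\<dots> \<le> (1 + 4 * u) * S"
      using S u(1) by (simp add: algebra_simps)
    finally show ?thesis
      unfolding S_def u_def .
  next
    case False
    then have "E * (1 + 2 * of_nat 0 * u) < \<rho>"
      using E by simp
    from fp_set_gap_above_pow2 [OF \<rho> p1 this [unfolded E_def u_def]]
    have "E * (1 + 2 * u) \<le> \<rho>"
      unfolding E_def u_def by simp
    then consider "E * (1 + 2 * u) < \<rho>" | "\<rho> = E * (1 + 2 * u)"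
      by (metis order_le_less)
    then show ?thesis
    proof cases
      case 1
      then have "E * (1 + 2 * of_nat 1 * u) < \<rho>"
        by simp
      from fp_set_gap_above_pow2 [OF \<rho> p1 this [unfolded E_def u_def]]
      have "E * (1 + 4 * u) \<le> \<rho>"
        unfolding E_def u_def by simp
      then have "u * E * (1 + 4 * u) \<le> u * \<rho>"
        using u(1) by (simp add: mult.assoc)
      then show ?thesis
        using err u(1) mult_left_mono [of "\<rho> - u * E" S "1 + 4 * u"]
        unfolding S_def [symmetric] u_def [symmetric] by (simp add: abs_le_iff algebra_simps)
    next
      case 2
      have "E * (1 + u) \<le> sqrt \<sigma>"
        using err 2 unfolding S_def by (simp add: abs_le_iff algebra_simps)
      then have "E\<^sup>2 * (1 + 4 * u) \<le> \<sigma>"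
        using fp_set_square_gap [OF \<sigma>(1) less_imp_le [OF \<sigma>(2)] p1] unfolding E_def u_def by simp
      then show ?thesis
        using prod_le_sqrt_of_le_quarter [of u E \<sigma>] u unfolding 2 u_def by simp
    qed
  qed
qed

section \<open>Error of the hypotenuse algorithm\<close>

lemma sqrt_mult_le_of_sq_le:
  fixes a b c :: real
  assumes "0 \<le> b" "0 \<le> c" "a * b\<^sup>2 \<le> c\<^sup>2"
  shows "sqrt a * b \<le> c"
proof -
  have "sqrt a * b = sqrt (a * b\<^sup>2)"
    using assms(1) by (simp add: real_sqrt_mult)
  also have "\<dots> \<le> sqrt (c\<^sup>2)"
    using assms(3) by (rule real_sqrt_le_mono)
  finally show ?thesis
    using assms(2) by simp
qed

definition hypot_error_bound :: "real \<Rightarrow> real" where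
  "hypot_error_bound u = (1 + 3 * u - sqrt (1 + 2 * u)) / (1 + u)"

lemma hypot_error_bound_upper:
  fixes u :: real
  assumes "0 < u"
  shows "(1 + 4 * u) * (1 + u / (1 + u)) \<le> (1 + hypot_error_bound u) * (1 + 3 * u)"
proof -
  have "(1 + 2 * u) * (1 + 3 * u)\<^sup>2 \<le> ((1 + 2 * u)\<^sup>2)\<^sup>2"
  proof -
    have "((1 + 2 * u)\<^sup>2)\<^sup>2 - (1 + 2 * u) * (1 + 3 * u)\<^sup>2 = (1 + 2 * u) * (3 * u\<^sup>2 + 8 * u ^ 3)"
      by (simp add: algebra_simps power2_eq_square power3_eq_cube)
    also have "\<dots> \<ge> 0"
      using assms by simp
    finally show ?thesis
      by simp
  qed
  then have "sqrt (1 + 2 * u) * (1 + 3 * u) \<le> (1 + 2 * u)\<^sup>2"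
    using assms by (intro sqrt_mult_le_of_sq_le) simp_all
  moreover have "(1 + 4 * u) * (1 + u / (1 + u)) * (1 + u) = (1 + 4 * u) * (1 + 2 * u)"
    using assms by (simp add: field_simps)
  moreover have "(1 + hypot_error_bound u) * (1 + 3 * u) * (1 + u)
      = (2 + 4 * u) * (1 + 3 * u) - sqrt (1 + 2 * u) * (1 + 3 * u)"
    unfolding hypot_error_bound_def using assms by (simp add: field_simps)
  ultimately have "(1 + 4 * u) * (1 + u / (1 + u)) * (1 + u) \<le> (1 + hypot_error_bound u) * (1 + 3 * u) * (1 + u)"
    by (simp add: algebra_simps power2_eq_square)
  then show ?thesis
    using assms by simp
qed

lemma hypot_error_bound_lower:
  fixes u :: real
  assumes "0 < u"
  shows "1 - hypot_error_bound u \<le> (1 - u / (1 + u))\<^sup>2"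
proof -
  have "(1 + 2 * u) * (1 + u)\<^sup>2 \<le> (1 + 2 * u + 2 * u\<^sup>2)\<^sup>2"
  proof -
    have "(1 + 2 * u + 2 * u\<^sup>2)\<^sup>2 - (1 + 2 * u) * (1 + u)\<^sup>2 = 3 * u\<^sup>2 + 6 * u ^ 3 + 4 * u ^ 4"
      by (simp add: algebra_simps power2_eq_square power3_eq_cube power4_eq_xxxx)
    also have "\<dots> \<ge> 0"
      using assms by simp
    finally show ?thesis
      by simp
  qed
  then have "sqrt (1 + 2 * u) * (1 + u) \<le> 1 + 2 * u + 2 * u\<^sup>2"
    using assms by (intro sqrt_mult_le_of_sq_le) simp_all
  moreover have "(1 - hypot_error_bound u) * (1 + u)\<^sup>2 = (1 + u) * (sqrt (1 + 2 * u) - 2 * u)"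
    unfolding hypot_error_bound_def using assms by (simp add: field_simps power2_eq_square)
  moreover have "(1 - u / (1 + u)) * (1 + u) = 1"
    using assms by (simp add: field_simps)
  then have "(1 - u / (1 + u))\<^sup>2 * (1 + u)\<^sup>2 = 1"
    by (simp flip: power_mult_distrib)
  ultimately have "(1 - hypot_error_bound u) * (1 + u)\<^sup>2 \<le> (1 - u / (1 + u))\<^sup>2 * (1 + u)\<^sup>2"
    by (simp add: algebra_simps power2_eq_square)
  then show ?thesis
    using assms by simp
qed

lemma hypot_error_bound_expansion:
  fixes u :: real
  assumes "0 < u" "u \<le> 1 / 4"
  shows "\<exists>\<kappa>. hypot_error_bound u = 2 * u + \<kappa> * u\<^sup>2 \<and> \<kappa> < - 5 / 4"
proof
  define \<kappa> where "\<kappa> = (hypot_error_bound u - 2 * u) / u\<^sup>2"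
  \<comment> \<open>Chosen so that (2u - 5/4 u^2)(1 + u) = 1 + 3u - w.\<close>
  define w where "w = 1 + u - 3 / 4 * u\<^sup>2 + 5 / 4 * u ^ 3"
  have "u\<^sup>2 \<le> (1 / 4)\<^sup>2" "u ^ 4 \<le> (1 / 4) ^ 4"
    using assms by (auto intro!: power_mono)
  then have "u\<^sup>2 \<le> 1 / 16" "u ^ 4 \<le> 1 / 256"
    by (simp_all add: power_divide)
  moreover have "0 \<le> u ^ 3"
    using assms by simp
  ultimately have "- 1 / 2 + u + 49 / 16 * u\<^sup>2 - 15 / 8 * u ^ 3 + 25 / 16 * u ^ 4 < 0"
    using assms by linarith
  then have "u\<^sup>2 * (- 1 / 2 + u + 49 / 16 * u\<^sup>2 - 15 / 8 * u ^ 3 + 25 / 16 * u ^ 4) < 0"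
    using assms by (simp add: mult_pos_neg)
  also have "u\<^sup>2 * (- 1 / 2 + u + 49 / 16 * u\<^sup>2 - 15 / 8 * u ^ 3 + 25 / 16 * u ^ 4) = w\<^sup>2 - (1 + 2 * u)"
    unfolding w_def by (simp add: algebra_simps power2_eq_square power3_eq_cube power4_eq_xxxx)
  finally have "w < sqrt (1 + 2 * u)"
    by (intro real_less_rsqrt) simp
  moreover have "(2 * u - 5 / 4 * u\<^sup>2) * (1 + u) = 1 + 3 * u - w"
    unfolding w_def by (simp add: field_simps power2_eq_square power3_eq_cube)
  ultimately have "hypot_error_bound u < 2 * u - 5 / 4 * u\<^sup>2"
    unfolding hypot_error_bound_def using assms by (simp add: divide_less_eq)
  then show "hypot_error_bound u = 2 * u + \<kappa> * u\<^sup>2 \<and> \<kappa> < - 5 / 4"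
    unfolding \<kappa>_def using assms by (simp add: divide_less_eq)
qed

lemma relative_error_compose:
  fixes v t s r :: real
  assumes v: "0 \<le> v" "v \<le> 1" and s: "\<bar>s - t\<bar> \<le> v * t" and r: "\<bar>r - s\<bar> \<le> v * s"
  shows "(1 - v)\<^sup>2 * t \<le> r" "r \<le> (1 + v)\<^sup>2 * t"
proof -
  have "(1 - v) * t \<le> s" "s \<le> (1 + v) * t"
    using s by (auto simp: abs_le_iff algebra_simps)
  then have "(1 - v) * ((1 - v) * t) \<le> (1 - v) * s" "(1 + v) * s \<le> (1 + v) * ((1 + v) * t)"
    using v by (auto intro: mult_left_mono)
  moreover have "(1 - v) * s \<le> r" "r \<le> (1 + v) * s"
    using r by (auto simp: abs_le_iff algebra_simps)
  ultimately show "(1 - v)\<^sup>2 * t \<le> r" "r \<le> (1 + v)\<^sup>2 * t"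
    by (simp_all add: power2_eq_square mult.assoc)
qed

lemma hypot_error_propagation:
  fixes u t \<sigma> \<rho> :: real
  defines "v \<equiv> u / (1 + u)"
  assumes u: "0 < u" and t: "0 < t"
    and \<sigma>: "(1 - v)\<^sup>2 * t \<le> \<sigma>" "\<sigma> \<le> (1 + v)\<^sup>2 * t"
    and \<rho>: "\<bar>\<rho> - sqrt \<sigma>\<bar> \<le> v * sqrt \<sigma>" "\<rho> * (1 + 3 * u) \<le> (1 + 4 * u) * sqrt \<sigma>"
  shows "\<bar>\<rho> / sqrt t - 1\<bar> \<le> hypot_error_bound u"
proof -
  have v: "0 \<le> v" "v < 1"
    unfolding v_def using u by simp_all
  have "sqrt ((1 - v)\<^sup>2 * t) \<le> sqrt \<sigma>" "sqrt \<sigma> \<le> sqrt ((1 + v)\<^sup>2 * t)"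
    using \<sigma> by simp_all
  then have sqrt_\<sigma>: "(1 - v) * sqrt t \<le> sqrt \<sigma>" "sqrt \<sigma> \<le> (1 + v) * sqrt t"
    using v by (simp_all add: real_sqrt_mult)
  have "(1 - hypot_error_bound u) * sqrt t \<le> (1 - v)\<^sup>2 * sqrt t"
    using hypot_error_bound_lower [OF u] unfolding v_def by (rule mult_right_mono) (use t in simp)
  also have "\<dots> = (1 - v) * ((1 - v) * sqrt t)"
    by (simp add: power2_eq_square)
  also have "\<dots> \<le> (1 - v) * sqrt \<sigma>"
    using sqrt_\<sigma>(1) v by (intro mult_left_mono) auto
  also have "\<dots> \<le> \<rho>"
    using \<rho>(1) by (simp add: abs_le_iff algebra_simps)
  finally have lower: "(1 - hypot_error_bound u) * sqrt t \<le> \<rho>" .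
  have "\<rho> * (1 + 3 * u) \<le> (1 + 4 * u) * sqrt \<sigma>"
    by (fact \<rho>(2))
  also have "\<dots> \<le> (1 + 4 * u) * ((1 + v) * sqrt t)"
    using sqrt_\<sigma>(2) u by (intro mult_left_mono) auto
  also have "\<dots> = (1 + 4 * u) * (1 + v) * sqrt t"
    by (simp add: mult.assoc)
  also have "\<dots> \<le> (1 + hypot_error_bound u) * (1 + 3 * u) * sqrt t"
    using hypot_error_bound_upper [OF u] unfolding v_def by (rule mult_right_mono) (use t in simp)
  also have "\<dots> = ((1 + hypot_error_bound u) * sqrt t) * (1 + 3 * u)"
    by (simp add: ac_simps)
  finally have upper: "\<rho> \<le> (1 + hypot_error_bound u) * sqrt t"
    using u by simp
  show ?thesis
    using lower upper t by (simp add: abs_le_iff field_simps)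
qed

theorem theorem1:
  fixes p :: nat and emin emax :: int and x y sx sy \<sigma> \<rho> :: real
  defines "u \<equiv> (2::real) powr (- real p)"
  assumes hp: "p \<ge> 2"
    and hx: "x \<in> fp_set p emin emax" and hy: "y \<in> fp_set p emin emax"
    and hnz: "x \<noteq> 0 \<or> y \<noteq> 0"
    and hsx: "is_RN p emin emax (x\<^sup>2) sx"
    and hsy: "is_RN p emin emax (y\<^sup>2) sy"
    and hsig: "is_RN p emin emax (sx + sy) \<sigma>"
    and hrho: "is_RN p emin emax (sqrt \<sigma>) \<rho>"
    and nx2: "in_normal_range p emin emax (x\<^sup>2)"
    and ny2: "in_normal_range p emin emax (y\<^sup>2)"
    and nsx: "in_normal_range p emin emax sx"
    and nsy: "in_normal_range p emin emax sy"
    and nsum: "in_normal_range p emin emax (sx + sy)"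
    and nsig: "in_normal_range p emin emax \<sigma>"
    and nsq: "in_normal_range p emin emax (sqrt \<sigma>)"
    and nrho: "in_normal_range p emin emax \<rho>"
  shows "\<bar>\<rho> / sqrt (x\<^sup>2 + y\<^sup>2) - 1\<bar> \<le> (1 + 3*u - sqrt (1 + 2*u)) / (1 + u)
         \<and> (\<exists>\<kappa>::real. (1 + 3*u - sqrt (1 + 2*u)) / (1 + u) = 2*u + \<kappa> * u\<^sup>2 \<and> \<kappa> < - 5/4)"
proof -
  define v where "v = u / (1 + u)"
  define t where "t = x\<^sup>2 + y\<^sup>2"
  have u: "0 < u" "u \<le> 1 / 4"
    unfolding u_def using unit_roundoff_le_quarter [OF hp] by simp_all
  have v: "0 \<le> v" "v < 1"
    unfolding v_def using u by simp_all
  have rel: "\<bar>r - a\<bar> \<le> v * a" if "0 \<le> a" "in_normal_range p emin emax a" "is_RN p emin emax a r" for a r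
    using is_RN_relative_error [OF _ that] hp unfolding v_def u_def by simp
  have "0 < t"
    unfolding t_def using hnz by (simp add: sum_power2_gt_zero_iff)
  have sum: "\<bar>(sx + sy) - t\<bar> \<le> v * t"
    using rel [OF _ nx2 hsx] rel [OF _ ny2 hsy] unfolding t_def by (simp add: abs_le_iff distrib_left)
  moreover have "v * t \<le> t"
    using v \<open>0 < t\<close> by (simp add: mult_left_le_one_le)
  ultimately have "0 \<le> sx + sy"
    by (simp add: abs_le_iff)
  note \<sigma> = relative_error_compose [OF v(1) less_imp_le [OF v(2)] sum rel [OF this nsum hsig]]
  have "0 < (1 - v)\<^sup>2 * t"
    using v \<open>0 < t\<close> by simp
  then have "0 < \<sigma>"
    using \<sigma>(1) by linarith
  have "\<rho> * (1 + 3 * u) \<le> (1 + 4 * u) * sqrt \<sigma>"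
    using is_RN_sqrt_of_float_upper [OF hp is_RN_in_fp_set [OF hsig] \<open>0 < \<sigma>\<close> nsq hrho]
    unfolding u_def .
  with \<open>0 < \<sigma>\<close> have "\<bar>\<rho> / sqrt t - 1\<bar> \<le> hypot_error_bound u"
    using hypot_error_propagation [OF u(1) \<open>0 < t\<close> \<sigma> [unfolded v_def] rel [OF _ nsq hrho, unfolded v_def]]
    by simp
  then show ?thesis
    using hypot_error_bound_expansion [OF u] unfolding t_def hypot_error_bound_def by simp
qed

end
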